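(* Let $\Sigma=(+1,-1,-1,-1,-1)$. If $\delta=1$ then $\mathcal P_{\Sigma,\delta}H_5=\varnothing$. If $\delta=\omega$ or $\delta=\omega^2$ then $\mathcal P_{\Sigma,\delta}H_5\neq\varnothing$.
   Context: $V=\mathbb C^3$ with Hermitian form of signature $(-,+,+)$; the sign $\sigma p$ of a nonisotropic $p\in\mathbb PV$ is $-1$ if $\langle p,p\rangle<0$ and $+1$ if $\langle p,p\rangle>0$. $\mathrm{SU}(2,1)$ = determinant-one form-preserving maps, $\mathrm{PU}(2,1)=\mathrm{SU}(2,1)/\{1,\omega,\omega^2\}$, $\omega=e^{2\pi i/3}$. For nonisotropic $p$, $R^px=2\frac{\langle x,p\rangle}{\langle p,p\rangle}p-x$; $\mathrm{ta}(p,q)=\frac{\langle p,q\rangle\langle q,p\rangle}{\langle p,p\rangle\langle q,q\rangle}$. $H_5=\langle r_1,\dots,r_5\mid r_i^2=r_5\cdots r_1=1\rangle$. $\mathcal P_{\Sigma,\delta}H_5$ is the set of representations $\varrho:H_5\to\mathrm{PU}(2,1)$ with $\varrho(r_i)=R^{p_i}$ for nonisotropic $p_i$ such that $\mathrm{ta}(p_i,p_j)\neq0,1$ for $i\neq j$, $\sigma p_i=\sigma_i$, and $R^{p_5}\cdots R^{p_1}=\delta$ in $\mathrm{SU}(2,1)$. *)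

theory Defs
  imports "HOL-Analysis.Analysis"
begin

definition herm :: "complex^3 \<Rightarrow> complex^3 \<Rightarrow> complex" where
  "herm x y = - (x$1 * cnj (y$1)) + x$2 * cnj (y$2) + x$3 * cnj (y$3)"

text \<open>Points of PV are represented by nonzero vectors; all notions below are scale invariant.\<close>
definition nonisotropic :: "complex^3 \<Rightarrow> bool" where
  "nonisotropic p \<longleftrightarrow> herm p p \<noteq> 0"

definition sigma_pt :: "complex^3 \<Rightarrow> int" where
  "sigma_pt p = (if Re (herm p p) < 0 then -1 else 1)"

definition refl :: "complex^3 \<Rightarrow> complex^3 \<Rightarrow> complex^3" where
  "refl p x = (2 * herm x p / herm p p) *s p - x"

definition ta :: "complex^3 \<Rightarrow> complex^3 \<Rightarrow> complex" where
  "ta p q = (herm p q * herm q p) / (herm p p * herm q q)"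

definition omega :: complex where
  "omega = cis (2 * pi / 3)"

text \<open>P_{Sigma,delta} H_5: a representation of H_5 is recorded by the images
  rho i of the generators r_i (i = 1..5), each given by its canonical lift R^{p_i} to SU(2,1);
  the relations r_i^2 = 1 hold automatically, and r_5...r_1 = 1 holds in PU(2,1)
  because the product equals the scalar delta in SU(2,1).\<close>
definition PH5 :: "(nat \<Rightarrow> int) \<Rightarrow> complex \<Rightarrow> (nat \<Rightarrow> (complex^3 \<Rightarrow> complex^3)) set" where
  "PH5 Sig delta = {rho. \<exists>p :: nat \<Rightarrow> complex^3.
      (\<forall>i\<in>{1..5}. nonisotropic (p i) \<and> sigma_pt (p i) = Sig i \<and> rho i = refl (p i)) \<and>
      (\<forall>i. i \<notin> {1..5} \<longrightarrow> rho i = id) \<and>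
      (\<forall>i\<in>{1..5}. \<forall>j\<in>{1..5}. i \<noteq> j \<longrightarrow> ta (p i) (p j) \<noteq> 0 \<and> ta (p i) (p j) \<noteq> 1) \<and>
      refl (p 5) \<circ> refl (p 4) \<circ> refl (p 3) \<circ> refl (p 2) \<circ> refl (p 1) = (\<lambda>x. delta *s x)}"

end

theory Submission
  imports Defs
begin

(* If R^p5 R^p4 R^p3 R^p2 R^p1 = 1 then R^p2 R^p1 = R^p3 R^p4 R^p5, and the traces of the two sides
   cannot agree.  For any two points tr (R^b R^a) = 4 ta(a,b) - 1, and ta(a,b) < 0 when a and b
   have opposite signs, so the trace of the left side has real part < -1.  For three negative points the real
   part of tr (R^a R^b R^c) is at least -1: after clearing the negative denominator <a,a><b,b><c,c>
   this is the statement that their Gram determinant, which equals -|det(a,b,c)|^2 because the form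
   has determinant -1, is not positive.
   For delta = omega five explicit points with coordinates in Z[omega] do the job, and conjugating
   all coordinates (the form has real coefficients) turns a solution for delta into one for
   cnj delta = omega^2. *)

lemma omega_eq_Complex: "omega = Complex (-1/2) (sqrt 3 / 2)"
  unfolding omega_def cis.ctr using cos_120 sin_120 by simp

lemma omega_mult_omega: "omega * omega = -1 - omega"
  unfolding omega_eq_Complex by (simp add: complex_eq_iff)

lemma omega_mult_omega_left: "omega * (omega * z) = - z - omega * z"
  by (metis mult.assoc omega_mult_omega mult_minus_left left_diff_distrib mult_1)

lemma cnj_omega: "cnj omega = -1 - omega"
  unfolding omega_eq_Complex by (simp add: complex_eq_iff)

lemma cnj_omega_eq_omega_squared: "cnj omega = omega\<^sup>2"
  by (simp add: cnj_omega power2_eq_square omega_mult_omega)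

lemmas omega_arith = cnj_omega omega_mult_omega omega_mult_omega_left algebra_simps

lemma herm_add_left: "herm (x + y) z = herm x z + herm y z"
  by (simp add: herm_def algebra_simps)

lemma herm_diff_left: "herm (x - y) z = herm x z - herm y z"
  by (simp add: herm_def algebra_simps)

lemma herm_scale_left: "herm (c *s x) y = c * herm x y"
  by (simp add: herm_def algebra_simps)

lemma herm_commute: "herm y x = cnj (herm x y)"
  by (simp add: herm_def)

lemma of_real_Re_herm_self: "of_real (Re (herm x x)) = herm x x"
  by (simp add: herm_def complex_eq_iff)

lemma herm_mult_herm_commute: "herm x y * herm y x = of_real ((cmod (herm x y))\<^sup>2)"
  by (metis herm_commute complex_norm_square)

lemma herm_gram_det:
  fixes v :: "complex^3^3"
  shows "det (\<chi> i j. herm (v $ i) (v $ j)) = - of_real ((cmod (det v))\<^sup>2)"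
  unfolding complex_norm_square det_3 herm_def by simp algebra

lemma ta_commute: "ta q p = ta p q"
  by (simp add: ta_def mult.commute)

lemma ta_eq_of_real: "ta p q = of_real ((cmod (herm p q))\<^sup>2 / (Re (herm p p) * Re (herm q q)))"
  unfolding ta_def herm_mult_herm_commute
  by (simp add: of_real_Re_herm_self)

lemma Re_ta_neg:
  assumes "Re (herm p p) > 0" "Re (herm q q) < 0" "ta p q \<noteq> 0"
  shows "Re (ta p q) < 0"
proof -
  have "herm p q \<noteq> 0"
    using assms(3) by (auto simp: ta_def)
  then show ?thesis
    using assms(1,2) by (simp add: ta_eq_of_real divide_pos_neg mult_pos_neg)
qed

lemma sigma_pt_eq_one_iff:
  assumes "nonisotropic p"
  shows "sigma_pt p = 1 \<longleftrightarrow> Re (herm p p) > 0"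
proof -
  have "Re (herm p p) \<noteq> 0"
    using assms of_real_Re_herm_self[of p] unfolding nonisotropic_def by force
  then show ?thesis
    by (auto simp: sigma_pt_def)
qed

lemma sigma_pt_eq_minus_one_iff: "sigma_pt p = -1 \<longleftrightarrow> Re (herm p p) < 0"
  by (simp add: sigma_pt_def)

lemma refl_refl: "nonisotropic p \<Longrightarrow> refl p (refl p x) = x"
  by (simp add: refl_def nonisotropic_def herm_diff_left herm_scale_left)

lemma refl_eq_rank_one: "refl p x = (2 / herm p p * herm x p) *s p - x"
  by (simp add: refl_def)

lemma trace_matrix_rank_one: "trace (matrix (\<lambda>x. (c * herm x q) *s p)) = c * herm p q"
  by (simp add: trace_def matrix_def sum_3 herm_def axis_def algebra_simps)

lemma trace_matrix_add:
  fixes f g :: "'a::comm_ring_1^'n \<Rightarrow> 'a^'n"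
  shows "trace (matrix (\<lambda>x. f x + g x)) = trace (matrix f) + trace (matrix g)"
  by (simp add: trace_def matrix_def sum.distrib)

lemma trace_matrix_diff:
  fixes f g :: "'a::comm_ring_1^'n \<Rightarrow> 'a^'n"
  shows "trace (matrix (\<lambda>x. f x - g x)) = trace (matrix f) - trace (matrix g)"
  by (simp add: trace_def matrix_def sum_subtractf)

lemma trace_matrix_ident: "trace (matrix (\<lambda>x::'a::semiring_1^'n. x)) = of_nat CARD('n)"
  using matrix_id_mat_1 trace_I unfolding id_def by metis

lemma trace_refl_comp_refl:
  assumes "nonisotropic a" "nonisotropic b"
  shows "trace (matrix (refl b \<circ> refl a)) = 4 * ta a b - 1"
proof -
  let ?k = "\<lambda>p. 2 / herm p p"
  have "refl b \<circ> refl a = (\<lambda>x. (?k b * ?k a * herm a b * herm x a) *s b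
      - (?k b * herm x b) *s b - (?k a * herm x a) *s a + x)"
    by (simp add: fun_eq_iff refl_eq_rank_one herm_diff_left herm_scale_left vec_eq_iff algebra_simps)
  then have "trace (matrix (refl b \<circ> refl a)) = ?k b * ?k a * herm a b * herm b a - ?k b * herm b b - ?k a * herm a a + 3"
    by (simp only: trace_matrix_add trace_matrix_diff trace_matrix_rank_one trace_matrix_ident) simp
  then show ?thesis
    using assms by (simp add: ta_def nonisotropic_def field_simps)
qed

lemma trace_refl_comp_refl_comp_refl:
  assumes "nonisotropic a" "nonisotropic b" "nonisotropic c"
  shows "trace (matrix (refl a \<circ> refl b \<circ> refl c)) =
    8 * (herm c b * herm b a * herm a c) / (herm a a * herm b b * herm c c) - 4 * (ta a b + ta a c + ta b c) + 3"
proof -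
  let ?k = "\<lambda>p. 2 / herm p p"
  have "refl a \<circ> refl b \<circ> refl c = (\<lambda>x. (?k a * ?k b * ?k c * herm c b * herm b a * herm x c) *s a
     - (?k a * ?k b * herm b a * herm x b) *s a - (?k a * ?k c * herm c a * herm x c) *s a
     + (?k a * herm x a) *s a - (?k b * ?k c * herm c b * herm x c) *s b
     + (?k b * herm x b) *s b + (?k c * herm x c) *s c - x)"
    by (simp add: fun_eq_iff refl_eq_rank_one herm_add_left herm_diff_left herm_scale_left vec_eq_iff algebra_simps)
  then have "trace (matrix (refl a \<circ> refl b \<circ> refl c)) =
     ?k a * ?k b * ?k c * herm c b * herm b a * herm a c - ?k a * ?k b * herm b a * herm a b
   - ?k a * ?k c * herm c a * herm a c + ?k a * herm a a - ?k b * ?k c * herm c b * herm b c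
   + ?k b * herm b b + ?k c * herm c c - 3"
    by (simp only: trace_matrix_add trace_matrix_diff trace_matrix_rank_one trace_matrix_ident) simp
  then show ?thesis
    using assms by (simp add: ta_def nonisotropic_def field_simps)
qed

lemma Re_trace_refl_comp_refl_lt:
  assumes "Re (herm a a) > 0" "Re (herm b b) < 0" "ta a b \<noteq> 0"
  shows "Re (trace (matrix (refl b \<circ> refl a))) < -1"
proof -
  have "nonisotropic a" "nonisotropic b"
    using assms(1,2) by (auto simp: nonisotropic_def)
  then show ?thesis
    using Re_ta_neg[OF assms] by (simp add: trace_refl_comp_refl)
qed

lemma herm_gram_inequality:
  "Re (herm a a) * Re (herm b b) * Re (herm c c) + 2 * Re (herm c b * herm b a * herm a c)
    - Re (herm a a) * (cmod (herm b c))\<^sup>2 - Re (herm b b) * (cmod (herm a c))\<^sup>2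
    - Re (herm c c) * (cmod (herm a b))\<^sup>2 \<le> 0"
proof -
  define Z where "Z = herm c b * herm b a * herm a c"
  have "herm a b * herm b c * herm c a = cnj Z"
    by (simp add: Z_def herm_commute[of a b] herm_commute[of b c] herm_commute[of c a])
  then have "herm a a * herm b b * herm c c + (Z + cnj Z) - herm a a * (herm b c * herm c b)
      - herm b b * (herm a c * herm c a) - herm c c * (herm a b * herm b a)
    = - of_real ((cmod (det (vector [a, b, c] :: complex^3^3)))\<^sup>2)"
    using herm_gram_det[of "vector [a, b, c]"] by (simp add: Z_def det_3 algebra_simps)
  moreover obtain Na Nb Nc where "herm a a = of_real Na" "herm b b = of_real Nb" "herm c c = of_real Nc"
    by (metis of_real_Re_herm_self)
  ultimately show ?thesis
    unfolding Z_def[symmetric]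
    by (simp add: herm_mult_herm_commute complex_add_cnj
        flip: of_real_mult of_real_power of_real_diff of_real_add of_real_minus)
qed

lemma Re_trace_refl_comp_refl_comp_refl_ge:
  assumes "Re (herm a a) < 0" "Re (herm b b) < 0" "Re (herm c c) < 0"
  shows "Re (trace (matrix (refl a \<circ> refl b \<circ> refl c))) \<ge> -1"
proof -
  obtain Na Nb Nc where N: "herm a a = of_real Na" "herm b b = of_real Nb" "herm c c = of_real Nc"
    by (metis of_real_Re_herm_self)
  have neg: "Na < 0" "Nb < 0" "Nc < 0"
    using assms by (simp_all add: N)
  then have "nonisotropic a" "nonisotropic b" "nonisotropic c"
    by (simp_all add: nonisotropic_def N)
  then have "Re (trace (matrix (refl a \<circ> refl b \<circ> refl c))) + 1 =
      4 * (2 * Re (herm c b * herm b a * herm a c) - Nc * (cmod (herm a b))\<^sup>2 - Nb * (cmod (herm a c))\<^sup>2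
        - Na * (cmod (herm b c))\<^sup>2 + Na * Nb * Nc) / (Na * Nb * Nc)"
    using neg by (simp add: trace_refl_comp_refl_comp_refl ta_eq_of_real N field_simps
        flip: of_real_mult)
  also have "\<dots> \<ge> 0"
  proof (rule divide_nonpos_neg)
    show "Na * Nb * Nc < 0"
      using neg by (metis mult_neg_neg mult_pos_neg)
  qed (use herm_gram_inequality[of a b c] in \<open>simp add: N\<close>)
  finally show ?thesis
    by simp
qed

lemma refl_product_ne_one:
  assumes "Re (herm p1 p1) > 0"
    and "Re (herm p2 p2) < 0" "Re (herm p3 p3) < 0" "Re (herm p4 p4) < 0" "Re (herm p5 p5) < 0"
    and "ta p1 p2 \<noteq> 0"
  shows "refl p5 \<circ> refl p4 \<circ> refl p3 \<circ> refl p2 \<circ> refl p1 \<noteq> (\<lambda>x. 1 *s x)"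
proof
  assume one: "refl p5 \<circ> refl p4 \<circ> refl p3 \<circ> refl p2 \<circ> refl p1 = (\<lambda>x. 1 *s x)"
  have "nonisotropic p3" "nonisotropic p4" "nonisotropic p5"
    using assms(3-5) by (auto simp: nonisotropic_def)
  have "refl p2 \<circ> refl p1 = refl p3 \<circ> refl p4 \<circ> refl p5"
  proof
    fix x
    let ?y = "refl p2 (refl p1 x)"
    have "refl p5 (refl p4 (refl p3 ?y)) = x"
      using fun_cong[OF one, of x] by simp
    then have "(refl p3 \<circ> refl p4 \<circ> refl p5) x = refl p3 (refl p4 (refl p5 (refl p5 (refl p4 (refl p3 ?y)))))"
      by simp
    also have "\<dots> = ?y"
      using \<open>nonisotropic p3\<close> \<open>nonisotropic p4\<close> \<open>nonisotropic p5\<close> by (simp add: refl_refl)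
    finally show "(refl p2 \<circ> refl p1) x = (refl p3 \<circ> refl p4 \<circ> refl p5) x"
      by simp
  qed
  then show False
    using Re_trace_refl_comp_refl_lt[OF assms(1,2,6)] Re_trace_refl_comp_refl_comp_refl_ge[OF assms(3-5)]
    by simp
qed

lemma PH5_nonempty_iff:
  "PH5 Sig \<delta> \<noteq> {} \<longleftrightarrow> (\<exists>p.
      (\<forall>i\<in>{1..5}. nonisotropic (p i) \<and> sigma_pt (p i) = Sig i) \<and>
      (\<forall>i\<in>{1..5}. \<forall>j\<in>{1..5}. i < j \<longrightarrow> ta (p i) (p j) \<noteq> 0 \<and> ta (p i) (p j) \<noteq> 1) \<and>
      refl (p 5) \<circ> refl (p 4) \<circ> refl (p 3) \<circ> refl (p 2) \<circ> refl (p 1) = (\<lambda>x. \<delta> *s x))"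
    (is "_ \<longleftrightarrow> (\<exists>p. ?points p \<and> ?pairs p \<and> ?product p)")
proof
  assume "PH5 Sig \<delta> \<noteq> {}"
  then obtain rho where "rho \<in> PH5 Sig \<delta>"
    by blast
  then obtain p where "?points p" "?product p"
    and "\<forall>i\<in>{1..5}. \<forall>j\<in>{1..5}. i \<noteq> j \<longrightarrow> ta (p i) (p j) \<noteq> 0 \<and> ta (p i) (p j) \<noteq> 1"
    unfolding PH5_def by blast
  then show "\<exists>p. ?points p \<and> ?pairs p \<and> ?product p"
    by (intro exI[of _ p]) auto
next
  assume "\<exists>p. ?points p \<and> ?pairs p \<and> ?product p"
  then obtain p where p: "?points p" "?pairs p" "?product p"
    by blast
  have "ta (p i) (p j) \<noteq> 0 \<and> ta (p i) (p j) \<noteq> 1" if "i \<in> {1..5}" "j \<in> {1..5}" "i \<noteq> j" for i j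
    using p(2) that ta_commute[of "p i" "p j"] by (cases "i < j") auto
  then have "(\<lambda>i. if i \<in> {1..5} then refl (p i) else id) \<in> PH5 Sig \<delta>"
    unfolding PH5_def using p(1,3) by (intro CollectI exI[of _ p]) auto
  then show "PH5 Sig \<delta> \<noteq> {}"
    by blast
qed

lemma PH5_one_empty: "PH5 (\<lambda>i. if i = 1 then 1 else -1) 1 = {}"
proof (rule ccontr)
  assume "PH5 (\<lambda>i. if i = 1 then 1 else -1) 1 \<noteq> {}"
  then obtain p :: "nat \<Rightarrow> complex^3"
    where p: "\<forall>i\<in>{1..5}. nonisotropic (p i) \<and> sigma_pt (p i) = (if i = 1 then 1 else -1)"
      "\<forall>i\<in>{1..5}. \<forall>j\<in>{1..5}. i < j \<longrightarrow> ta (p i) (p j) \<noteq> 0 \<and> ta (p i) (p j) \<noteq> 1"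
      "refl (p 5) \<circ> refl (p 4) \<circ> refl (p 3) \<circ> refl (p 2) \<circ> refl (p 1) = (\<lambda>x. 1 *s x)"
    unfolding PH5_nonempty_iff by blast
  have pos: "Re (herm (p 1) (p 1)) > 0"
    using p(1)[rule_format, of 1] by (auto simp: sigma_pt_eq_one_iff)
  have neg: "Re (herm (p i) (p i)) < 0" if "i \<in> {2..5}" for i
    using p(1)[rule_format, of i] that by (auto simp: sigma_pt_eq_minus_one_iff)
  have "ta (p 1) (p 2) \<noteq> 0"
    using p(2) by simp
  from refl_product_ne_one[OF pos neg[of 2] neg[of 3] neg[of 4] neg[of 5] this] p(3) show False
    by simp
qed

definition cnj_vec :: "complex^'n \<Rightarrow> complex^'n" where
  "cnj_vec x = (\<chi> i. cnj (x $ i))"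

lemma cnj_vec_cnj_vec [simp]: "cnj_vec (cnj_vec x) = x"
  by (simp add: cnj_vec_def vec_eq_iff)

lemma herm_cnj_vec [simp]: "herm (cnj_vec x) (cnj_vec y) = cnj (herm x y)"
  by (simp add: cnj_vec_def herm_def)

lemma refl_cnj_vec: "refl (cnj_vec p) (cnj_vec x) = cnj_vec (refl p x)"
  unfolding refl_def herm_cnj_vec by (simp add: cnj_vec_def vec_eq_iff)

lemma ta_cnj_vec [simp]: "ta (cnj_vec p) (cnj_vec q) = cnj (ta p q)"
  by (simp add: ta_def)

lemma PH5_cnj_nonempty:
  assumes "PH5 Sig \<delta> \<noteq> {}"
  shows "PH5 Sig (cnj \<delta>) \<noteq> {}"
proof -
  obtain p where p: "\<forall>i\<in>{1..5}. nonisotropic (p i) \<and> sigma_pt (p i) = Sig i"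
      "\<forall>i\<in>{1..5}. \<forall>j\<in>{1..5}. i < j \<longrightarrow> ta (p i) (p j) \<noteq> 0 \<and> ta (p i) (p j) \<noteq> 1"
      "refl (p 5) \<circ> refl (p 4) \<circ> refl (p 3) \<circ> refl (p 2) \<circ> refl (p 1) = (\<lambda>x. \<delta> *s x)"
    using assms unfolding PH5_nonempty_iff by blast
  let ?q = "\<lambda>i. cnj_vec (p i)"
  have "refl (?q 5) \<circ> refl (?q 4) \<circ> refl (?q 3) \<circ> refl (?q 2) \<circ> refl (?q 1) = (\<lambda>x. cnj \<delta> *s x)"
  proof
    fix x :: "complex^3"
    have "(refl (?q 5) \<circ> refl (?q 4) \<circ> refl (?q 3) \<circ> refl (?q 2) \<circ> refl (?q 1)) (cnj_vec (cnj_vec x))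
        = cnj_vec ((refl (p 5) \<circ> refl (p 4) \<circ> refl (p 3) \<circ> refl (p 2) \<circ> refl (p 1)) (cnj_vec x))"
      by (simp only: comp_apply refl_cnj_vec)
    then show "(refl (?q 5) \<circ> refl (?q 4) \<circ> refl (?q 3) \<circ> refl (?q 2) \<circ> refl (?q 1)) x = cnj \<delta> *s x"
      unfolding p(3) by (simp add: cnj_vec_def vec_eq_iff)
  qed
  moreover have "\<forall>i\<in>{1..5}. nonisotropic (?q i) \<and> sigma_pt (?q i) = Sig i"
    using p(1) by (simp add: nonisotropic_def sigma_pt_def)
  moreover have "\<forall>i\<in>{1..5}. \<forall>j\<in>{1..5}. i < j \<longrightarrow> ta (?q i) (?q j) \<noteq> 0 \<and> ta (?q i) (?q j) \<noteq> 1"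
    using p(2) by simp
  ultimately show ?thesis
    unfolding PH5_nonempty_iff by (intro exI[of _ ?q]) blast
qed

lemma herm_vector:
  "herm (vector [a1, a2, a3]) (vector [b1, b2, b3]) = - (a1 * cnj b1) + a2 * cnj b2 + a3 * cnj b3"
  by (simp add: herm_def)

lemma refl_vector:
  "refl (vector [p1, p2, p3]) (vector [x1, x2, x3]) =
    (let c = 2 * herm (vector [x1, x2, x3]) (vector [p1, p2, p3])
               / herm (vector [p1, p2, p3]) (vector [p1, p2, p3])
     in vector [c * p1 - x1, c * p2 - x2, c * p3 - x3])"
  unfolding refl_def Let_def by (simp add: vec_eq_iff forall_3)

definition pt1 :: "complex^3" where "pt1 = vector [1, 3, 0]"
definition pt2 :: "complex^3" where "pt2 = vector [1, 0, 0]"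
definition pt3 :: "complex^3" where "pt3 = vector [7, -1 + 4 * omega, 2]"
definition pt4 :: "complex^3" where "pt4 = vector [-13 + 199 * omega, -183 - 87 * omega, -122 - 64 * omega]"
definition pt5 :: "complex^3" where "pt5 = vector [-5 + 335 * omega, -303 - 111 * omega, -202 - 128 * omega]"

lemmas pt_defs = pt1_def pt2_def pt3_def pt4_def pt5_def

lemma herm_pt_self:
  "herm pt1 pt1 = 8" "herm pt2 pt2 = -1" "herm pt3 pt3 = -24" "herm pt4 pt4 = -6048" "herm pt5 pt5 = -12096"
  by (simp_all add: pt_defs herm_vector omega_arith)

lemma ta_pt:
  "ta pt1 pt2 = -1/8" "ta pt1 pt3 = -91/48" "ta pt1 pt4 = -751/144" "ta pt1 pt5 = -1963/288"
  "ta pt2 pt3 = 49/24" "ta pt2 pt4 = 2017/288" "ta pt2 pt5 = 5425/576"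
  "ta pt3 pt4 = 421/64" "ta pt3 pt5 = 1333/128"
  "ta pt4 pt5 = 9/8"
  by (simp_all add: ta_def herm_pt_self) (simp_all add: pt_defs herm_vector omega_arith)

(* The simplifier rewrites the innermost reflection first and normalises the resulting vector to
   entries a + b * omega with omega_arith before the next reflection is applied, so no
   intermediate vectors have to be supplied. *)
lemma refl_pt_product_vector:
  "refl pt5 (refl pt4 (refl pt3 (refl pt2 (refl pt1 (vector [x1, x2, x3]))))) = vector [omega * x1, omega * x2, omega * x3]"
  unfolding pt_defs by (simp add: refl_vector herm_vector Let_def omega_arith field_simps)

lemma refl_pt_product: "refl pt5 \<circ> refl pt4 \<circ> refl pt3 \<circ> refl pt2 \<circ> refl pt1 = (\<lambda>x. omega *s x)"
proof
  fix x :: "complex^3"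
  have "x = vector [x $ 1, x $ 2, x $ 3]"
    by (simp add: vec_eq_iff forall_3)
  then obtain x1 x2 x3 where x: "x = vector [x1, x2, x3]"
    by blast
  show "(refl pt5 \<circ> refl pt4 \<circ> refl pt3 \<circ> refl pt2 \<circ> refl pt1) x = omega *s x"
    unfolding x by (simp add: refl_pt_product_vector vec_eq_iff forall_3)
qed

lemma PH5_omega_nonempty: "PH5 (\<lambda>i. if i = 1 then 1 else -1) omega \<noteq> {}"
  unfolding PH5_nonempty_iff
proof (intro exI conjI)
  let ?p = "\<lambda>i. [pt1, pt2, pt3, pt4, pt5] ! (i - 1)"
  have one_to_five: "{1..5} = {1, 2, 3, 4, 5 :: nat}"
    by auto
  show "\<forall>i\<in>{1..5}. nonisotropic (?p i) \<and> sigma_pt (?p i) = (if i = 1 then 1 else -1)"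
    unfolding one_to_five by (simp add: nonisotropic_def sigma_pt_def herm_pt_self)
  show "\<forall>i\<in>{1..5}. \<forall>j\<in>{1..5}. i < j \<longrightarrow> ta (?p i) (?p j) \<noteq> 0 \<and> ta (?p i) (?p j) \<noteq> 1"
    unfolding one_to_five by (simp add: ta_pt) (simp add: complex_eq_iff)
  show "refl (?p 5) \<circ> refl (?p 4) \<circ> refl (?p 3) \<circ> refl (?p 2) \<circ> refl (?p 1) = (\<lambda>x. omega *s x)"
    by (simp add: refl_pt_product)
qed

theorem mainTheorem8:
  fixes Sig :: "nat \<Rightarrow> int"
  defines "Sig \<equiv> (\<lambda>i. if i = 1 then 1 else -1)"
  shows "PH5 Sig 1 = {} \<and> PH5 Sig omega \<noteq> {} \<and> PH5 Sig (omega^2) \<noteq> {}"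
proof -
  have "PH5 Sig (omega^2) \<noteq> {}"
    using PH5_cnj_nonempty[OF PH5_omega_nonempty] unfolding Sig_def cnj_omega_eq_omega_squared .
  then show ?thesis
    using PH5_one_empty PH5_omega_nonempty unfolding Sig_def by blast
qed

end
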